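(* Let $G$ be a valise $(N,k)$ Adinkra with associated doubly even code $C$. Then the automorphism group of $G$ has order $2^{N-2k-a}$, and its orbits on the vertex set are $2^{k+a}$ in number and all of equal size, where $a=0$ if $C$ contains the all-ones word $(1,\dots,1)$ and $a=1$ otherwise.
   Context: An Adinkra of dimension $N$ is a finite connected simple graph $G=(V,E)$ with: a bipartition of $V$ into bosons and fermions (every edge joins a boson and a fermion); a height function (disregarded for valise Adinkras); a coloring of $E$ by colors $\{1,\dots,N\}$ such that each vertex is incident to exactly one edge of each color; an edge parity $\pi:E\to\mathbb{Z}_2$ (parity $1$ = dashed); such that every path with edge colors $(i,j)$, $i\ne j$, lies in a unique 4-cycle with colors $(i,j,i,j)$, each having an odd number of dashed edges. If $|V|=2^{N-k}$, $G$ is an $(N,k)$ Adinkra. Switching a vertex reverses the parity of its incident edges. An automorphism of $G$ is a permutation of $V$ preserving adjacency, edge colors and the boson/fermion bipartition which becomes parity-preserving after switching some set of vertices; automorphisms inducing the same permutation are identified. A doubly even $(N,k)$ code is a $k$-dimensional subspace of $\mathbb{Z}_2^N$ all of whose elements have Hamming weight $\equiv0\pmod4$. Labeling the vertices of an $N$-cube Adinkra by $\mathbb{Z}_2^N$ so that color-$i$ edges join $v$ and $v+e_i$, every $(N,k)$ Adinkra is equivalent to one obtained by identifying vertices whose labels differ by elements of some doubly even $(N,k)$ code $C$; this $C$ is the associated code. *)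

theory Defs
  imports Main
begin

(* Elements of Z_2^N are represented as subsets of {..<N} (support sets);
   addition is symmetric difference. Colors are 0..N-1 (paper: 1..N). *)

definition symdiff :: "nat set \<Rightarrow> nat set \<Rightarrow> nat set" where
  "symdiff x y = (x - y) \<union> (y - x)"

definition doubly_even_code :: "nat \<Rightarrow> nat \<Rightarrow> nat set set \<Rightarrow> bool" where
  "doubly_even_code N k C \<longleftrightarrow>
     C \<subseteq> Pow {..<N} \<and> {} \<in> C \<and>
     (\<forall>x\<in>C. \<forall>y\<in>C. symdiff x y \<in> C) \<and>
     card C = 2 ^ k \<and>
     (\<forall>w\<in>C. 4 dvd card w)"

(* An N-edge-coloured graph with vertex set V is encoded by the maps nb i:
   nb i v is the unique neighbour of v along the edge of colour i.
   The edge of colour i at v is the 2-set {v, nb i v}; dashed gives its parity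
   (True = dashed); boson gives the bipartition (True = boson). *)
definition adinkra ::
  "nat \<Rightarrow> 'v set \<Rightarrow> ('v \<Rightarrow> bool) \<Rightarrow> (nat \<Rightarrow> 'v \<Rightarrow> 'v) \<Rightarrow> ('v set \<Rightarrow> bool) \<Rightarrow> bool" where
  "adinkra N V boson nb dashed \<longleftrightarrow>
     finite V \<and> V \<noteq> {} \<and>
     \<comment> \<open>each vertex has exactly one edge of each colour (a perfect matching per colour)\<close>
     (\<forall>i<N. \<forall>v\<in>V. nb i v \<in> V \<and> nb i v \<noteq> v \<and> nb i (nb i v) = v) \<and>
     \<comment> \<open>simple graph: no two edges of different colours join the same pair\<close>
     (\<forall>i<N. \<forall>j<N. i \<noteq> j \<longrightarrow> (\<forall>v\<in>V. nb i v \<noteq> nb j v)) \<and>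
     \<comment> \<open>every edge joins a boson and a fermion\<close>
     (\<forall>i<N. \<forall>v\<in>V. boson (nb i v) \<longleftrightarrow> \<not> boson v) \<and>
     \<comment> \<open>connected\<close>
     (\<forall>v\<in>V. \<forall>w\<in>V. (\<lambda>x y. x \<in> V \<and> (\<exists>i<N. y = nb i x))\<^sup>*\<^sup>* v w) \<and>
     \<comment> \<open>the path v -i- nb i v -j- x closes to a 4-cycle with colours (i,j,i,j),
         which has an odd number of dashed edges\<close>
     (\<forall>i<N. \<forall>j<N. i \<noteq> j \<longrightarrow> (\<forall>v\<in>V.
        let w = nb i v; x = nb j w; y = nb i x in
          nb j y = v \<and>
          odd (card (Set.filter dashed {{v, w}, {w, x}, {x, y}, {y, v}}))))"

(* Automorphisms, identified with the permutations of V they induce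
   (normalised to be the identity outside V). *)
definition adinkra_aut ::
  "nat \<Rightarrow> 'v set \<Rightarrow> ('v \<Rightarrow> bool) \<Rightarrow> (nat \<Rightarrow> 'v \<Rightarrow> 'v) \<Rightarrow> ('v set \<Rightarrow> bool) \<Rightarrow> ('v \<Rightarrow> 'v) set" where
  "adinkra_aut N V boson nb dashed =
     {\<sigma>. bij_betw \<sigma> V V \<and> (\<forall>v. v \<notin> V \<longrightarrow> \<sigma> v = v) \<and>
          (\<forall>v\<in>V. boson (\<sigma> v) = boson v) \<and>
          (\<forall>i<N. \<forall>v\<in>V. \<sigma> (nb i v) = nb i (\<sigma> v)) \<and>
          (\<exists>S. \<forall>i<N. \<forall>v\<in>V.
             dashed {\<sigma> v, \<sigma> (nb i v)} = (dashed {v, nb i v} \<noteq> ((v \<in> S) \<noteq> (nb i v \<in> S))))}"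

definition aut_orbits ::
  "nat \<Rightarrow> 'v set \<Rightarrow> ('v \<Rightarrow> bool) \<Rightarrow> (nat \<Rightarrow> 'v \<Rightarrow> 'v) \<Rightarrow> ('v set \<Rightarrow> bool) \<Rightarrow> 'v set set" where
  "aut_orbits N V boson nb dashed =
     (\<lambda>v. (\<lambda>\<sigma>. \<sigma> v) ` adinkra_aut N V boson nb dashed) ` V"

definition coset :: "nat set set \<Rightarrow> nat set \<Rightarrow> nat set set" where
  "coset C x = (\<lambda>c. symdiff x c) ` C"

definition quot_vertices :: "nat \<Rightarrow> nat set set \<Rightarrow> nat set set set" where
  "quot_vertices N C = {coset C x | x. x \<subseteq> {..<N}}"

definition quot_nb :: "nat \<Rightarrow> nat set set \<Rightarrow> nat set set" where
  "quot_nb i X = (\<lambda>y. symdiff y {i}) ` X"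

(* C is an associated code of G: G is equivalent (colour- and bipartition-preserving
   graph isomorphism, parities agreeing after switching a set S of vertices) to an
   Adinkra obtained from the N-cube by identifying vertices whose labels differ by C. *)
definition associated_code ::
  "nat \<Rightarrow> 'v set \<Rightarrow> ('v \<Rightarrow> bool) \<Rightarrow> (nat \<Rightarrow> 'v \<Rightarrow> 'v) \<Rightarrow> ('v set \<Rightarrow> bool) \<Rightarrow> nat set set \<Rightarrow> bool" where
  "associated_code N V boson nb dashed C \<longleftrightarrow>
     (\<exists>(bQ :: nat set set \<Rightarrow> bool) (dQ :: nat set set set \<Rightarrow> bool) (\<phi> :: 'v \<Rightarrow> nat set set).
        adinkra N (quot_vertices N C) bQ quot_nb dQ \<and>
        bij_betw \<phi> V (quot_vertices N C) \<and>
        (\<forall>v\<in>V. bQ (\<phi> v) = boson v) \<and>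
        (\<forall>i<N. \<forall>v\<in>V. \<phi> (nb i v) = quot_nb i (\<phi> v)) \<and>
        (\<exists>S. \<forall>i<N. \<forall>v\<in>V.
           dQ {\<phi> v, \<phi> (nb i v)} = (dashed {v, nb i v} \<noteq> ((v \<in> S) \<noteq> (nb i v \<in> S)))))"

end

theory Submission
  imports Defs
begin

text \<open>Label the vertices of the Adinkra by the words of \<open>\<int>\<^sub>2\<^sup>N\<close> modulo the code \<open>C\<close>. An
  automorphism commutes with all colour involutions, so by connectedness it is a translation
  \<open>y \<mapsto> y + x\<close> of the labels; it preserves the bipartition iff \<open>|x|\<close> is even. The dashing is the
  standard dashing of the cube changed by a vertex switching, and comparing the two dashings shows
  that translation by \<open>x\<close> preserves the dashing up to switching iff \<open>x\<close> is orthogonal to \<open>C\<close>.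
  So the automorphism group is \<open>X / C\<close>, where \<open>X\<close> is the dual of the code spanned by \<open>C\<close> and
  the all-ones word; that code has \<open>2\<^sup>k\<^sup>+\<^sup>a\<close> words, so \<open>|X| = 2\<^sup>N\<^sup>-\<^sup>k\<^sup>-\<^sup>a\<close>. The translations act
  freely, so every orbit has \<open>|Aut|\<close> elements and there are \<open>2\<^sup>N\<^sup>-\<^sup>k / |Aut|\<close> orbits.\<close>

section \<open>Symmetric difference and parity\<close>

lemma symdiff_commute: "symdiff x y = symdiff y x"
  unfolding symdiff_def by blast

lemma symdiff_assoc: "symdiff (symdiff x y) z = symdiff x (symdiff y z)"
  unfolding symdiff_def by blast

lemma symdiff_self [simp]: "symdiff x x = {}"
  and symdiff_empty [simp]: "symdiff x {} = x" "symdiff {} x = x"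
  and symdiff_cancel [simp]: "symdiff x (symdiff x y) = y" "symdiff (symdiff y x) x = y"
  unfolding symdiff_def by blast+

lemma symdiff_singleton: "symdiff y {i} = (if i \<in> y then y - {i} else insert i y)"
  unfolding symdiff_def by auto

lemma insert_eq_symdiff_singleton: "i \<notin> y \<Longrightarrow> insert i y = symdiff y {i}"
  by (simp add: symdiff_singleton)

lemma symdiff_subset: "x \<subseteq> A \<Longrightarrow> y \<subseteq> A \<Longrightarrow> symdiff x y \<subseteq> A"
  unfolding symdiff_def by blast

lemma symdiff_Int_distrib: "symdiff a b \<inter> c = symdiff (a \<inter> c) (b \<inter> c)"
  unfolding symdiff_def by blast

lemma card_sym_diff_add_card_Int:
  assumes "finite a" "finite b"
  shows "card (sym_diff a b) + 2 * card (a \<inter> b) = card a + card b"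
proof -
  have "card (sym_diff a b) = card (a - b) + card (b - a)"
    by (rule card_Un_disjoint) (use assms in auto)
  then show ?thesis
    using card_Int_Diff[OF assms(1), of b] card_Int_Diff[OF assms(2), of a] by (simp add: Int_commute)
qed

lemma even_card_sym_diff:
  assumes "finite a" "finite b"
  shows "even (card (sym_diff a b)) \<longleftrightarrow> (even (card a) \<longleftrightarrow> even (card b))"
  using card_sym_diff_add_card_Int[OF assms] by presburger

lemma even_card_symdiff:
  "finite a \<Longrightarrow> finite b \<Longrightarrow> even (card (symdiff a b)) \<longleftrightarrow> (even (card a) \<longleftrightarrow> even (card b))"
  unfolding symdiff_def by (rule even_card_sym_diff)

lemma even_card_Int_if_dvd_4:
  assumes "finite a" "finite b" "4 dvd card a" "4 dvd card b" "4 dvd card (symdiff a b)"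
  shows "even (card (a \<inter> b))"
proof -
  have "4 dvd 2 * card (a \<inter> b)"
    using card_sym_diff_add_card_Int[OF assms(1,2), folded symdiff_def] assms(3-5) by (metis dvd_add_right_iff dvd_add)
  then show ?thesis by presburger
qed

lemma cube_induct [consumes 1, case_names empty flip]:
  assumes "y \<subseteq> {..<N}" "P {}"
    and "\<And>y i. y \<subseteq> {..<N} \<Longrightarrow> i < N \<Longrightarrow> i \<notin> y \<Longrightarrow> P y \<Longrightarrow> P (symdiff y {i})"
  shows "P y"
proof -
  have "finite y" using assms(1) finite_subset by blast
  then show ?thesis using assms(1)
  proof (induction y rule: finite_induct)
    case (insert i y)
    then have "P (symdiff y {i})" using assms(3)[of y i] by simp
    then show ?case using insert_eq_symdiff_singleton[OF insert.hyps(2)] by simp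
  qed (use assms(2) in simp)
qed

lemma flip_invariant_imp_constant:
  assumes "\<And>y i. y \<subseteq> {..<N} \<Longrightarrow> i < N \<Longrightarrow> F (symdiff y {i}) = F y"
    and "y \<subseteq> {..<N}"
  shows "F y = F {}"
  using assms(2) by (induction rule: cube_induct) (simp_all add: assms(1))

section \<open>Counting\<close>

lemma card_filter_involution:
  assumes "finite A" "\<And>a. a \<in> A \<Longrightarrow> f a \<in> A" "\<And>a. a \<in> A \<Longrightarrow> f (f a) = a"
    and "\<And>a. a \<in> A \<Longrightarrow> Q (f a) \<longleftrightarrow> \<not> Q a"
  shows "2 * card {a\<in>A. Q a} = card A"
proof -
  have "bij_betw f {a\<in>A. Q a} {a\<in>A. \<not> Q a}"
    by (rule bij_betw_byWitness[where f'=f]) (use assms in auto)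
  then have "card {a\<in>A. \<not> Q a} = card {a\<in>A. Q a}"
    by (simp add: bij_betw_same_card)
  moreover have "card A = card {a\<in>A. Q a} + card {a\<in>A. \<not> Q a}"
    using assms(1) by (subst card_Un_disjoint[symmetric]) (auto intro: arg_cong[where f=card])
  ultimately show ?thesis by simp
qed

lemma sum_card_filter_swap:
  "finite A \<Longrightarrow> finite B \<Longrightarrow>
   (\<Sum>a\<in>A. card {b\<in>B. R a b}) = (\<Sum>b\<in>B. card {a\<in>A. R a b})"
  by (simp add: card_eq_sum sum.inter_filter del: sum_constant) (rule sum.swap)

lemma card_eq_mult_card_if_fibres:
  assumes "finite A" "f ` A \<subseteq> B" "finite B" "\<And>b. b \<in> B \<Longrightarrow> card {a\<in>A. f a = b} = m"
  shows "card A = m * card B"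
proof -
  have "card A = (\<Sum>b\<in>B. card {a\<in>A. f a = b})"
    using sum.group[OF assms(1,3,2), of "\<lambda>_. 1::nat"] by (simp add: Collect_conj_eq)
  also have "\<dots> = m * card B" using assms(4) by simp
  finally show ?thesis .
qed

lemma mult_power2_eq_power2D:
  fixes m a b :: nat
  assumes "m * 2 ^ a = 2 ^ b"
  shows "a \<le> b \<and> m = 2 ^ (b - a)"
proof -
  have "m \<noteq> 0" using assms by (cases m) auto
  then have "(2::nat) ^ a \<le> m * 2 ^ a" by simp
  then have "a \<le> b" using assms by simp
  then have "m * 2 ^ a = 2 ^ (b - a) * 2 ^ a" using assms by (simp flip: power_add)
  then show ?thesis using \<open>a \<le> b\<close> by simp
qed

lemma odd_card_filter_four:
  assumes "distinct [a, b, c, d]"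
  shows "odd (card (Set.filter P {a, b, c, d})) \<longleftrightarrow> ((P a \<noteq> P b) \<noteq> (P c \<noteq> P d))"
proof -
  have "Set.filter P {a, b, c, d} = set (filter P [a, b, c, d])" by auto
  then have "card (Set.filter P {a, b, c, d}) = length (filter P [a, b, c, d])"
    using distinct_card[OF distinct_filter[OF assms]] by simp
  then show ?thesis by simp
qed

section \<open>Binary linear codes\<close>

definition binary_subspace :: "nat \<Rightarrow> nat set set \<Rightarrow> bool" where
  "binary_subspace N H \<longleftrightarrow> H \<subseteq> Pow {..<N} \<and> {} \<in> H \<and> (\<forall>a\<in>H. \<forall>b\<in>H. symdiff a b \<in> H)"

definition binary_dual :: "nat \<Rightarrow> nat set set \<Rightarrow> nat set set" where
  "binary_dual N H = {x. x \<subseteq> {..<N} \<and> (\<forall>h\<in>H. even (card (x \<inter> h)))}"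

lemma doubly_even_code_imp_binary_subspace: "doubly_even_code N k C \<Longrightarrow> binary_subspace N C"
  unfolding doubly_even_code_def binary_subspace_def by blast

lemma card_even_Int_Pow:
  assumes "h \<subseteq> {..<N}" "h \<noteq> {}"
  shows "2 * card {x\<in>Pow {..<N}. even (card (x \<inter> h))} = 2 ^ N"
proof -
  obtain j where "j \<in> h" using assms(2) by blast
  have "2 * card {x\<in>Pow {..<N}. even (card (x \<inter> h))} = card (Pow {..<N})"
  proof (rule card_filter_involution[where f="\<lambda>x. symdiff x {j}"])
    fix x
    have "symdiff x {j} \<inter> h = symdiff (x \<inter> h) {j}"
      using \<open>j \<in> h\<close> unfolding symdiff_def by blast
    moreover have "finite (x \<inter> h)"
      using assms(1) finite_subset by blast
    ultimately show "even (card (symdiff x {j} \<inter> h)) \<longleftrightarrow> \<not> even (card (x \<inter> h))"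
      using even_card_symdiff[of "x \<inter> h" "{j}"] by simp
  next
    fix x assume "x \<in> Pow {..<N}"
    moreover have "{j} \<subseteq> {..<N}" using \<open>j \<in> h\<close> assms(1) by auto
    ultimately show "symdiff x {j} \<in> Pow {..<N}" using symdiff_subset by blast
  qed simp_all
  then show ?thesis by (simp add: card_Pow)
qed

lemma card_even_Int_subspace:
  assumes "binary_subspace N H" "x \<subseteq> {..<N}" "x \<notin> binary_dual N H"
  shows "2 * card {h\<in>H. even (card (x \<inter> h))} = card H"
proof -
  obtain h0 where h0: "h0 \<in> H" "odd (card (x \<inter> h0))"
    using assms(2,3) unfolding binary_dual_def by auto
  have "finite H" "finite x"
    using assms(1,2) finite_subset unfolding binary_subspace_def by (auto intro: finite_subset)
  show ?thesis
  proof (rule card_filter_involution[where f="\<lambda>h. symdiff h h0"])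
    fix h
    have "x \<inter> symdiff h h0 = symdiff (x \<inter> h) (x \<inter> h0)"
      unfolding symdiff_def by blast
    then show "even (card (x \<inter> symdiff h h0)) \<longleftrightarrow> \<not> even (card (x \<inter> h))"
      using even_card_symdiff[of "x \<inter> h" "x \<inter> h0"] \<open>finite x\<close> h0(2) by auto
  qed (use \<open>finite H\<close> h0(1) assms(1) in \<open>auto simp: binary_subspace_def\<close>)
qed

text \<open>Double counting of the pairs \<open>(x, h)\<close> with \<open>|x \<inter> h|\<close> even.\<close>

theorem card_binary_dual_mult_card:
  assumes "binary_subspace N H"
  shows "card (binary_dual N H) * card H = 2 ^ N"
proof -
  let ?U = "Pow {..<N}" and ?P = "binary_dual N H"
  have fin: "finite H" "finite ?U"
    using assms finite_subset unfolding binary_subspace_def by auto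
  have "?P \<subseteq> ?U" unfolding binary_dual_def by auto
  have "2 * (\<Sum>x\<in>?U. card {h\<in>H. even (card (x \<inter> h))}) = (\<Sum>x\<in>?U. card H + (if x \<in> ?P then card H else 0))"
    unfolding sum_distrib_left
  proof (rule sum.cong)
    fix x assume "x \<in> ?U"
    show "2 * card {h\<in>H. even (card (x \<inter> h))} = card H + (if x \<in> ?P then card H else 0)"
    proof (cases "x \<in> ?P")
      case True
      then have "{h\<in>H. even (card (x \<inter> h))} = H" unfolding binary_dual_def by auto
      then show ?thesis using True by simp
    qed (use card_even_Int_subspace[OF assms] \<open>x \<in> ?U\<close> in auto)
  qed simp
  also have "\<dots> = card H * (2 ^ N + card ?P)"
    using fin \<open>?P \<subseteq> ?U\<close>
    by (simp add: sum.distrib sum.inter_restrict[symmetric] Int_absorb1 card_Pow algebra_simps)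
  finally have lhs: "2 * (\<Sum>x\<in>?U. card {h\<in>H. even (card (x \<inter> h))}) = card H * (2 ^ N + card ?P)" .
  have "2 * (\<Sum>h\<in>H. card {x\<in>?U. even (card (x \<inter> h))}) = (\<Sum>h\<in>H. 2 ^ N + (if h = {} then 2 ^ N else 0))"
    unfolding sum_distrib_left
  proof (rule sum.cong)
    fix h assume "h \<in> H"
    then have "h \<subseteq> {..<N}" using assms unfolding binary_subspace_def by auto
    then show "2 * card {x\<in>?U. even (card (x \<inter> h))} = 2 ^ N + (if h = {} then 2 ^ N else 0)"
      using card_even_Int_Pow[of h N] by (cases "h = {}") (simp_all add: card_Pow flip: Pow_def)
  qed simp
  also have "\<dots> = 2 ^ N * (card H + 1)"
    using fin assms by (simp add: sum.distrib binary_subspace_def)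
  finally have rhs: "2 * (\<Sum>h\<in>H. card {x\<in>?U. even (card (x \<inter> h))}) = 2 ^ N * (card H + 1)" .
  from lhs rhs sum_card_filter_swap[OF fin(2,1)]
  have "card H * (2 ^ N + card ?P) = 2 ^ N * (card H + 1)" by simp
  then show ?thesis by (simp add: algebra_simps)
qed

definition span_insert :: "nat set \<Rightarrow> nat set set \<Rightarrow> nat set set" where
  "span_insert w H = H \<union> symdiff w ` H"

lemma mem_span_insert_iff: "z \<in> span_insert w H \<longleftrightarrow> z \<in> H \<or> symdiff w z \<in> H"
  unfolding span_insert_def by (auto intro: image_eqI[of _ _ "symdiff w z"])

lemma binary_subspace_span_insert:
  assumes H: "binary_subspace N H" and w: "w \<subseteq> {..<N}"
  shows "binary_subspace N (span_insert w H)"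
  unfolding binary_subspace_def
proof (intro conjI ballI)
  show "span_insert w H \<subseteq> Pow {..<N}"
    using H w unfolding span_insert_def binary_subspace_def symdiff_def by auto
  show "{} \<in> span_insert w H"
    using H by (simp add: mem_span_insert_iff binary_subspace_def)
  fix a b assume "a \<in> span_insert w H" "b \<in> span_insert w H"
  moreover have "symdiff (symdiff w a) b = symdiff w (symdiff a b)"
    and "symdiff a (symdiff w b) = symdiff w (symdiff a b)"
    and "symdiff (symdiff w a) (symdiff w b) = symdiff a b"
    unfolding symdiff_def by blast+
  ultimately show "symdiff a b \<in> span_insert w H"
    using H unfolding mem_span_insert_iff binary_subspace_def by metis
qed

lemma card_span_insert:
  assumes H: "binary_subspace N H"
  shows "card (span_insert w H) = (if w \<in> H then card H else 2 * card H)"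
proof (cases "w \<in> H")
  case True
  then have "symdiff w ` H \<subseteq> H" using H unfolding binary_subspace_def by blast
  then show ?thesis using True unfolding span_insert_def by (simp add: Un_absorb2)
next
  case False
  have "finite H" using H finite_subset unfolding binary_subspace_def by auto
  have "H \<inter> symdiff w ` H = {}"
  proof (rule ccontr)
    assume "H \<inter> symdiff w ` H \<noteq> {}"
    then obtain c where "c \<in> H" "symdiff w c \<in> H" by blast
    then have "symdiff (symdiff w c) c \<in> H" using H unfolding binary_subspace_def by blast
    then show False using False by simp
  qed
  moreover have "card (symdiff w ` H) = card H"
    by (rule card_image) (rule inj_onI, metis symdiff_cancel(1))
  ultimately show ?thesis
    using False \<open>finite H\<close> unfolding span_insert_def by (simp add: card_Un_disjoint)
qed

lemma symdiff_mem_binary_dual: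
  assumes "x \<in> binary_dual N H" "x' \<in> binary_dual N H"
  shows "symdiff x x' \<in> binary_dual N H"
proof -
  have "finite x" "finite x'" using assms finite_subset unfolding binary_dual_def by auto
  then show ?thesis
    using assms symdiff_subset[of x "{..<N}" x'] even_card_symdiff[of "x \<inter> h" "x' \<inter> h" for h]
    unfolding binary_dual_def by (auto simp: symdiff_Int_distrib)
qed

lemma binary_dual_span_insert:
  assumes "{} \<in> H"
  shows "binary_dual N (span_insert w H) = {x\<in>binary_dual N H. even (card (x \<inter> w))}"
proof -
  have parity: "even (card (x \<inter> symdiff w h)) \<longleftrightarrow> (even (card (x \<inter> w)) \<longleftrightarrow> even (card (x \<inter> h)))"
    if "x \<subseteq> {..<N}" for x h
  proof -
    have "x \<inter> symdiff w h = symdiff (x \<inter> w) (x \<inter> h)" unfolding symdiff_def by blast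
    moreover have "finite x" using that finite_subset by blast
    ultimately show ?thesis using even_card_symdiff[of "x \<inter> w" "x \<inter> h"] by simp
  qed
  show ?thesis
  proof (intro set_eqI iffI)
    fix x assume x: "x \<in> binary_dual N (span_insert w H)"
    have "w \<in> span_insert w H" using assms by (simp add: mem_span_insert_iff)
    then show "x \<in> {x\<in>binary_dual N H. even (card (x \<inter> w))}"
      using x unfolding binary_dual_def span_insert_def by blast
  next
    fix x assume "x \<in> {x\<in>binary_dual N H. even (card (x \<inter> w))}"
    then show "x \<in> binary_dual N (span_insert w H)"
      using parity unfolding binary_dual_def span_insert_def by auto
  qed
qed

section \<open>Edge functions on the cube\<close>

text \<open>A function \<open>D y i\<close> assigns a bit to the edge from \<open>y\<close> to \<open>y + e\<^sub>i\<close>; the bits combine by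
  exclusive or, written \<open>\<noteq>\<close>. The potential integrates \<open>D\<close> along the path from \<open>{}\<close> to \<open>y\<close>
  that adds the coordinates of \<open>y\<close> in increasing order.\<close>

fun cube_potential :: "(nat set \<Rightarrow> nat \<Rightarrow> bool) \<Rightarrow> nat \<Rightarrow> nat set \<Rightarrow> bool" where
  "cube_potential D 0 y = False"
| "cube_potential D (Suc n) y =
     (if n \<in> y then cube_potential D n (y - {n}) \<noteq> D (y - {n}) n else cube_potential D n y)"

theorem cube_potential_exact:
  assumes edge: "\<And>y i. y \<subseteq> {..<N} \<Longrightarrow> i < N \<Longrightarrow> D (symdiff y {i}) i = D y i"
    and closed: "\<And>y i j. y \<subseteq> {..<N} \<Longrightarrow> i < N \<Longrightarrow> j < N \<Longrightarrow> i \<noteq> j \<Longrightarrow>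
               (D y i \<noteq> D (symdiff y {i}) j) = (D (symdiff y {j}) i \<noteq> D y j)"
    and "y \<subseteq> {..<N}" "i < N"
  shows "D y i \<longleftrightarrow> cube_potential D N y \<noteq> cube_potential D N (symdiff y {i})"
proof -
  have "D y i \<longleftrightarrow> cube_potential D n y \<noteq> cube_potential D n (symdiff y {i})"
    if "n \<le> N" "y \<subseteq> {..<n}" "i < n" for n y i
    using that
  proof (induction n arbitrary: y i)
    case (Suc n)
    let ?P = "cube_potential D n"
    show ?case
    proof (cases "n \<in> y")
      case False
      then have "y \<subseteq> {..<n}" using Suc.prems(2) by (auto simp: less_Suc_eq)
      show ?thesis
      proof (cases "i = n")
        case True
        then show ?thesis using \<open>n \<notin> y\<close> by (auto simp: symdiff_singleton)
      next
        case False
        then have "i < n" "n \<notin> symdiff y {i}"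
          using Suc.prems(3) \<open>n \<notin> y\<close> by (auto simp: symdiff_singleton)
        then show ?thesis
          using Suc.IH[OF _ \<open>y \<subseteq> {..<n}\<close>] Suc.prems(1) \<open>n \<notin> y\<close> by simp
      qed
    next
      case True
      define z where "z = y - {n}"
      have z: "z \<subseteq> {..<n}" "y = symdiff z {n}"
        using Suc.prems(2) True unfolding z_def by (auto simp: less_Suc_eq symdiff_singleton)
      then have zN: "z \<subseteq> {..<N}" "n < N" using Suc.prems(1) by auto
      show ?thesis
      proof (cases "i = n")
        case True
        have "symdiff y {n} = z" "n \<notin> z" using \<open>n \<in> y\<close> unfolding z_def symdiff_def by auto
        moreover have "D y n = D z n" using edge[OF zN] z(2) by simp
        ultimately show ?thesis using \<open>n \<in> y\<close> True by (auto simp: z_def)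
      next
        case False
        then have "i < n" using Suc.prems(3) by simp
        have "symdiff y {i} = insert n (symdiff z {i})" "n \<notin> symdiff z {i}"
          using z(2) False True unfolding symdiff_def z_def by auto
        then have "cube_potential D (Suc n) (symdiff y {i}) = (?P (symdiff z {i}) \<noteq> D (symdiff z {i}) n)"
          by simp
        moreover have "cube_potential D (Suc n) y = (?P z \<noteq> D z n)"
          using True by (simp add: z_def)
        moreover have "D z i \<longleftrightarrow> ?P z \<noteq> ?P (symdiff z {i})"
          using Suc.IH[OF _ z(1) \<open>i < n\<close>] Suc.prems(1) by simp
        moreover have "(D z i \<noteq> D (symdiff z {i}) n) = (D y i \<noteq> D z n)"
          using closed[OF zN(1) _ zN(2) False] \<open>i < n\<close> zN(2) z(2) by simp
        ultimately show ?thesis by argo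
      qed
    qed
  qed simp
  then show ?thesis using assms(3,4) by simp
qed

definition cube_sign :: "nat set \<Rightarrow> nat \<Rightarrow> bool" where
  "cube_sign y i \<longleftrightarrow> odd (card (y \<inter> {..<i}))"

lemma cube_sign_symdiff: "cube_sign (symdiff y x) i \<longleftrightarrow> cube_sign y i \<noteq> odd (card (x \<inter> {..<i}))"
  unfolding cube_sign_def symdiff_Int_distrib using even_card_symdiff[of "y \<inter> {..<i}" "x \<inter> {..<i}"]
  by simp

lemma cube_sign_flip: "cube_sign (symdiff y {j}) i \<longleftrightarrow> cube_sign y i \<noteq> (j < i)"
proof -
  have "{j} \<inter> {..<i} = (if j < i then {j} else {})" by auto
  then show ?thesis using cube_sign_symdiff[of y "{j}" i] by simp
qed

lemma cube_sign_square:
  "i \<noteq> j \<Longrightarrow> (cube_sign y i \<noteq> cube_sign (symdiff y {i}) j) \<longleftrightarrow> \<not> (cube_sign (symdiff y {j}) i \<noteq> cube_sign y j)"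
  using cube_sign_flip[of y j i] cube_sign_flip[of y i j] by auto

text \<open>A bilinear form whose symmetrisation is the parity of \<open>|x \<inter> y|\<close> when \<open>x\<close> has
  even weight.\<close>

definition inversion_parity :: "nat set \<Rightarrow> nat set \<Rightarrow> bool" where
  "inversion_parity x y \<longleftrightarrow> odd (card {(j, i). j \<in> x \<and> i \<in> y \<and> j < i})"

lemma finite_inversions: "finite x \<Longrightarrow> finite y \<Longrightarrow> finite {(j, i). j \<in> x \<and> i \<in> y \<and> j < i}"
  by (rule finite_subset[of _ "x \<times> y"]) auto

lemma inversion_parity_symdiff_right:
  assumes "finite x" "finite y" "finite c"
  shows "inversion_parity x (symdiff y c) \<longleftrightarrow> inversion_parity x y \<noteq> inversion_parity x c"
proof -
  let ?I = "\<lambda>y. {(j, i). j \<in> x \<and> i \<in> y \<and> j < i}"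
  have "?I (symdiff y c) = (?I y - ?I c) \<union> (?I c - ?I y)"
    unfolding symdiff_def by auto
  then show ?thesis
    unfolding inversion_parity_def using even_card_sym_diff[OF finite_inversions[of x y] finite_inversions[of x c]] assms
    by simp
qed

lemma inversion_parity_empty [simp]: "\<not> inversion_parity x {}"
  unfolding inversion_parity_def by simp

lemma inversion_parity_singleton: "inversion_parity x {i} \<longleftrightarrow> odd (card (x \<inter> {..<i}))"
proof -
  have "{(j, i'). j \<in> x \<and> i' \<in> {i} \<and> j < i'} = (x \<inter> {..<i}) \<times> {i}" by auto
  then show ?thesis unfolding inversion_parity_def by (simp add: card_cartesian_product)
qed

lemma inversion_parity_swap:
  assumes "finite c" "finite x" "even (card c)"
  shows "inversion_parity c x \<noteq> inversion_parity x c \<longleftrightarrow> odd (card (c \<inter> x))"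
proof -
  define A where "A = {(j, i). j \<in> c \<and> i \<in> x \<and> j < i}"
  define B where "B = prod.swap ` {(j, i). j \<in> x \<and> i \<in> c \<and> j < i}"
  define D where "D = (\<lambda>a. (a, a)) ` (c \<inter> x)"
  have fin: "finite A" "finite B" "finite D"
    unfolding A_def B_def D_def using finite_inversions assms(1,2) by auto
  have "c \<times> x = (A \<union> B) \<union> D"
    unfolding A_def B_def D_def by (auto simp: image_iff)
  moreover have "A \<inter> B = {}" "(A \<union> B) \<inter> D = {}"
    unfolding A_def B_def D_def by auto
  ultimately have "card (c \<times> x) = card A + card B + card D"
    using fin by (simp add: card_Un_disjoint)
  also have "card B = card {(j, i). j \<in> x \<and> i \<in> c \<and> j < i}"
    unfolding B_def by (rule card_image) simp
  also have "card D = card (c \<inter> x)"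
    unfolding D_def by (rule card_image) (simp add: inj_on_def)
  finally have "card c * card x = card A + card {(j, i). j \<in> x \<and> i \<in> c \<and> j < i} + card (c \<inter> x)"
    by (simp add: card_cartesian_product)
  then have "even (card A + card {(j, i). j \<in> x \<and> i \<in> c \<and> j < i} + card (c \<inter> x))"
    using assms(3) by (metis even_mult_iff)
  then show ?thesis
    unfolding inversion_parity_def A_def by auto
qed

section \<open>The quotient of the cube by a code\<close>

lemma coset_eq_iff:
  assumes "binary_subspace N C"
  shows "coset C y = coset C y' \<longleftrightarrow> symdiff y y' \<in> C"
proof
  have C: "{} \<in> C" "\<And>a b. a \<in> C \<Longrightarrow> b \<in> C \<Longrightarrow> symdiff a b \<in> C"
    using assms unfolding binary_subspace_def by auto
  have subset: "coset C a \<subseteq> coset C b" if "symdiff a b \<in> C" for a b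
  proof
    fix z assume "z \<in> coset C a"
    then obtain c where c: "c \<in> C" "z = symdiff a c" unfolding coset_def by auto
    then have "z = symdiff b (symdiff (symdiff a b) c)" unfolding symdiff_def by blast
    then show "z \<in> coset C b" unfolding coset_def using C(2)[OF that c(1)] by blast
  qed
  show "symdiff y y' \<in> C \<Longrightarrow> coset C y = coset C y'"
    using subset[of y y'] subset[of y' y] symdiff_commute[of y y'] by auto
  assume "coset C y = coset C y'"
  moreover have "y \<in> coset C y" unfolding coset_def using C(1) by (auto intro: image_eqI[of _ _ "{}"])
  ultimately obtain c where "c \<in> C" "y = symdiff y' c" unfolding coset_def by auto
  moreover from this(2) have "symdiff y y' = c" unfolding symdiff_def by blast
  ultimately show "symdiff y y' \<in> C" by simp
qed

lemma quot_nb_coset: "quot_nb i (coset C y) = coset C (symdiff y {i})"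
  unfolding quot_nb_def coset_def image_image by (rule image_cong) (auto simp: symdiff_def)

locale quotient_adinkra =
  fixes N :: nat and V :: "'v set" and boson :: "'v \<Rightarrow> bool"
    and nb :: "nat \<Rightarrow> 'v \<Rightarrow> 'v" and dashed :: "'v set \<Rightarrow> bool"
    and C :: "nat set set" and \<phi> :: "'v \<Rightarrow> nat set set"
  assumes adinkra: "adinkra N V boson nb dashed"
    and code: "binary_subspace N C"
    and doubly_even: "\<And>c. c \<in> C \<Longrightarrow> 4 dvd card c"
    and \<phi>_bij: "bij_betw \<phi> V (quot_vertices N C)"
    and \<phi>_nb: "\<And>i v. i < N \<Longrightarrow> v \<in> V \<Longrightarrow> \<phi> (nb i v) = quot_nb i (\<phi> v)"
begin

abbreviation "AUT \<equiv> adinkra_aut N V boson nb dashed"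

lemma finite_V: "finite V"
  and nb_in: "i < N \<Longrightarrow> v \<in> V \<Longrightarrow> nb i v \<in> V"
  and nb_neq: "i < N \<Longrightarrow> v \<in> V \<Longrightarrow> nb i v \<noteq> v"
  and nb_nb: "i < N \<Longrightarrow> v \<in> V \<Longrightarrow> nb i (nb i v) = v"
  and nb_neq_nb: "i < N \<Longrightarrow> j < N \<Longrightarrow> i \<noteq> j \<Longrightarrow> v \<in> V \<Longrightarrow> nb i v \<noteq> nb j v"
  and boson_nb: "i < N \<Longrightarrow> v \<in> V \<Longrightarrow> boson (nb i v) \<longleftrightarrow> \<not> boson v"
  using adinkra unfolding adinkra_def by auto

lemma square_dashed:
  assumes "i < N" "j < N" "i \<noteq> j" "v \<in> V"
  defines "w \<equiv> nb i v" and "x \<equiv> nb j (nb i v)" and "z \<equiv> nb i (nb j (nb i v))"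
  shows "(dashed {v, w} \<noteq> dashed {w, x}) \<noteq> (dashed {x, z} \<noteq> dashed {z, v})"
proof -
  have V: "w \<in> V" "x \<in> V" "z \<in> V"
    unfolding w_def x_def z_def using nb_in assms(1,2,4) by auto
  have sq: "nb j z = v \<and> odd (card (Set.filter dashed {{v, w}, {w, x}, {x, z}, {z, v}}))"
    using adinkra assms(1-4) unfolding adinkra_def Let_def w_def x_def z_def by blast
  have "v \<noteq> x"
  proof
    assume "v = x"
    then have "nb j v = w" unfolding x_def w_def using nb_nb[OF assms(2) V(1)[unfolded w_def]] by simp
    then show False using nb_neq_nb[OF assms(1-4)] unfolding w_def by simp
  qed
  moreover have "w \<noteq> z"
  proof
    assume "w = z"
    moreover have "nb i w = v" unfolding w_def using nb_nb[OF assms(1,4)] .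
    moreover have "nb i z = x" unfolding z_def x_def using nb_nb[OF assms(1) V(2)[unfolded x_def]] .
    ultimately show False using \<open>v \<noteq> x\<close> by simp
  qed
  moreover have "v \<noteq> w" "w \<noteq> x" "x \<noteq> z" "z \<noteq> v"
    using nb_neq[OF assms(1,4)] nb_neq[OF assms(2) V(1)] nb_neq[OF assms(1) V(2)]
      nb_neq[OF assms(2) V(3)] sq unfolding w_def x_def z_def by auto
  ultimately have "distinct [{v, w}, {w, x}, {x, z}, {z, v}]"
    by (auto simp: doubleton_eq_iff)
  from odd_card_filter_four[OF this, of dashed] show ?thesis using sq by blast
qed

lemma code_subset: "c \<in> C \<Longrightarrow> c \<subseteq> {..<N}"
  and empty_in_code: "{} \<in> C"
  and symdiff_in_code: "a \<in> C \<Longrightarrow> b \<in> C \<Longrightarrow> symdiff a b \<in> C"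
  using code unfolding binary_subspace_def by auto

lemma finite_codeword: "c \<in> C \<Longrightarrow> finite c"
  using code_subset finite_subset by blast

lemma even_card_codeword: "c \<in> C \<Longrightarrow> even (card c)"
  using doubly_even by (metis dvd_trans even_numeral)

lemma even_card_Int_codewords: "c \<in> C \<Longrightarrow> c' \<in> C \<Longrightarrow> even (card (c \<inter> c'))"
  by (rule even_card_Int_if_dvd_4) (auto simp: finite_codeword doubly_even symdiff_in_code)

definition vertex :: "nat set \<Rightarrow> 'v" where
  "vertex y = inv_into V \<phi> (coset C y)"

lemma coset_in_image: "y \<subseteq> {..<N} \<Longrightarrow> coset C y \<in> \<phi> ` V"
  using \<phi>_bij unfolding bij_betw_def quot_vertices_def by auto

lemma vertex_in: "y \<subseteq> {..<N} \<Longrightarrow> vertex y \<in> V"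
  unfolding vertex_def using coset_in_image by (simp add: inv_into_into)

lemma \<phi>_vertex: "y \<subseteq> {..<N} \<Longrightarrow> \<phi> (vertex y) = coset C y"
  unfolding vertex_def using coset_in_image by (simp add: f_inv_into_f)

lemma vertex_eq_iff:
  assumes "y \<subseteq> {..<N}" "y' \<subseteq> {..<N}"
  shows "vertex y = vertex y' \<longleftrightarrow> symdiff y y' \<in> C"
proof -
  have "vertex y = vertex y' \<longleftrightarrow> \<phi> (vertex y) = \<phi> (vertex y')"
    using \<phi>_bij vertex_in assms by (auto simp: bij_betw_def dest: inj_onD)
  then show ?thesis
    using \<phi>_vertex assms coset_eq_iff[OF code] by simp
qed

lemma vertex_cases:
  assumes "v \<in> V"
  obtains y where "y \<subseteq> {..<N}" "v = vertex y"
proof -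
  have "\<phi> v \<in> quot_vertices N C" using \<phi>_bij assms by (auto simp: bij_betw_def)
  then obtain y where y: "y \<subseteq> {..<N}" "\<phi> v = coset C y" unfolding quot_vertices_def by auto
  have "vertex y = v"
    unfolding vertex_def y(2)[symmetric] using \<phi>_bij assms by (simp add: bij_betw_def)
  then show thesis using that y(1) by simp
qed

lemma symdiff_flip_subset: "y \<subseteq> {..<N} \<Longrightarrow> i < N \<Longrightarrow> symdiff y {i} \<subseteq> {..<N}"
  by (rule symdiff_subset) auto

lemma nb_vertex:
  assumes "y \<subseteq> {..<N}" "i < N"
  shows "nb i (vertex y) = vertex (symdiff y {i})"
proof -
  have "\<phi> (nb i (vertex y)) = \<phi> (vertex (symdiff y {i}))"
    using \<phi>_nb[OF assms(2) vertex_in] \<phi>_vertex assms symdiff_flip_subset quot_nb_coset by simp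
  then show ?thesis
    using \<phi>_bij nb_in[OF assms(2) vertex_in] vertex_in[OF symdiff_flip_subset] assms
    by (auto simp: bij_betw_def dest: inj_onD)
qed

lemma boson_vertex: "y \<subseteq> {..<N} \<Longrightarrow> boson (vertex y) \<longleftrightarrow> (boson (vertex {}) \<longleftrightarrow> even (card y))"
proof (induction rule: cube_induct)
  case (flip y i)
  have "finite y" using flip.hyps(1) finite_subset by blast
  then have "card (symdiff y {i}) = Suc (card y)"
    using flip.hyps(3) by (simp add: insert_eq_symdiff_singleton[symmetric])
  moreover have "boson (vertex (symdiff y {i})) \<longleftrightarrow> \<not> boson (vertex y)"
    using boson_nb[OF flip.hyps(2) vertex_in[OF flip.hyps(1)]] nb_vertex[OF flip.hyps(1,2)] by simp
  ultimately show ?case using flip.IH by simp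
qed simp

definition label :: "'v \<Rightarrow> nat set" where
  "label v = (SOME y. y \<subseteq> {..<N} \<and> vertex y = v)"

lemma
  assumes "v \<in> V"
  shows label_subset: "label v \<subseteq> {..<N}" and vertex_label: "vertex (label v) = v"
proof -
  have "label v \<subseteq> {..<N} \<and> vertex (label v) = v"
    unfolding label_def by (rule someI_ex) (use vertex_cases[OF assms] in metis)
  then show "label v \<subseteq> {..<N}" "vertex (label v) = v" by simp_all
qed

lemma symdiff_label_vertex_in_code:
  assumes "y \<subseteq> {..<N}"
  shows "symdiff (label (vertex y)) y \<in> C"
  using vertex_eq_iff[OF label_subset[OF vertex_in[OF assms]] assms] vertex_label[OF vertex_in[OF assms]]
  by simp

definition edge_dashed :: "nat set \<Rightarrow> nat \<Rightarrow> bool" where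
  "edge_dashed y i \<longleftrightarrow> dashed {vertex y, vertex (symdiff y {i})}"

lemma edge_dashed_flip: "edge_dashed (symdiff y {i}) i \<longleftrightarrow> edge_dashed y i"
  unfolding edge_dashed_def by (simp add: insert_commute)

lemma edge_dashed_symdiff_code:
  assumes "c \<in> C" "y \<subseteq> {..<N}" "i < N"
  shows "edge_dashed (symdiff y c) i \<longleftrightarrow> edge_dashed y i"
proof -
  have c: "c \<subseteq> {..<N}" using code_subset assms(1) by simp
  have "vertex (symdiff y c) = vertex y"
    using vertex_eq_iff[OF symdiff_subset[OF assms(2) c] assms(2)] assms(1)
    by (simp add: symdiff_assoc symdiff_commute[of y])
  moreover have "vertex (symdiff (symdiff y c) {i}) = vertex (symdiff y {i})"
  proof -
    have "symdiff (symdiff (symdiff y c) {i}) (symdiff y {i}) = c" unfolding symdiff_def by blast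
    then show ?thesis
      using vertex_eq_iff[OF symdiff_flip_subset[OF symdiff_subset[OF assms(2) c] assms(3)]
          symdiff_flip_subset[OF assms(2,3)]] assms(1) by simp
  qed
  ultimately show ?thesis unfolding edge_dashed_def by simp
qed

lemma edge_dashed_square:
  assumes "y \<subseteq> {..<N}" "i < N" "j < N" "i \<noteq> j"
  shows "edge_dashed y i \<noteq> edge_dashed (symdiff y {i}) j \<longleftrightarrow>
         \<not> (edge_dashed (symdiff y {j}) i \<noteq> edge_dashed y j)"
proof -
  have yi: "symdiff y {i} \<subseteq> {..<N}" and yij: "symdiff (symdiff y {i}) {j} \<subseteq> {..<N}"
    using symdiff_flip_subset assms by auto
  have comm: "symdiff (symdiff y {j}) {i} = symdiff (symdiff y {i}) {j}"
    unfolding symdiff_def by blast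
  have w: "nb i (vertex y) = vertex (symdiff y {i})"
    using nb_vertex assms by simp
  have x: "nb j (vertex (symdiff y {i})) = vertex (symdiff (symdiff y {i}) {j})"
    using nb_vertex[OF yi assms(3)] .
  have z: "nb i (vertex (symdiff (symdiff y {i}) {j})) = vertex (symdiff y {j})"
    using nb_vertex[OF yij assms(2)] comm[symmetric] by simp
  show ?thesis
    using square_dashed[OF assms(2-4) vertex_in[OF assms(1)]]
    unfolding w x z edge_dashed_def comm by (simp add: insert_commute)
qed

text \<open>Every dashing of the quotient differs from the standard dashing of the cube by a switching
  of the labels: the difference satisfies the closedness condition of the cube, as both dashings
  have an odd number of dashed edges on each square.\<close>

definition switching :: "nat set \<Rightarrow> bool" where
  "switching = cube_potential (\<lambda>y i. edge_dashed y i \<noteq> cube_sign y i) N"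

lemma edge_dashed_eq_switching:
  assumes "y \<subseteq> {..<N}" "i < N"
  shows "edge_dashed y i \<longleftrightarrow> (switching y \<noteq> switching (symdiff y {i})) \<noteq> cube_sign y i"
proof -
  have "(edge_dashed y i \<noteq> cube_sign y i) \<longleftrightarrow> switching y \<noteq> switching (symdiff y {i})"
    unfolding switching_def
  proof (rule cube_potential_exact[OF _ _ assms])
    show "(edge_dashed (symdiff y {i}) i \<noteq> cube_sign (symdiff y {i}) i) = (edge_dashed y i \<noteq> cube_sign y i)"
      for y i using edge_dashed_flip cube_sign_flip[of y i i] by simp
    show "((edge_dashed y i \<noteq> cube_sign y i) \<noteq> (edge_dashed (symdiff y {i}) j \<noteq> cube_sign (symdiff y {i}) j)) =
          ((edge_dashed (symdiff y {j}) i \<noteq> cube_sign (symdiff y {j}) i) \<noteq> (edge_dashed y j \<noteq> cube_sign y j))"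
      if "y \<subseteq> {..<N}" "i < N" "j < N" "i \<noteq> j" for y i j
      using edge_dashed_square[OF that] cube_sign_square[OF that(4), of y] by argo
  qed
  then show ?thesis by argo
qed

definition translate :: "nat set \<Rightarrow> 'v \<Rightarrow> 'v" where
  "translate x v = (if v \<in> V then vertex (symdiff (label v) x) else v)"

lemma translate_vertex:
  assumes "y \<subseteq> {..<N}" "x \<subseteq> {..<N}"
  shows "translate x (vertex y) = vertex (symdiff y x)"
proof -
  have r: "label (vertex y) \<subseteq> {..<N}" using label_subset[OF vertex_in[OF assms(1)]] .
  have "symdiff (symdiff (label (vertex y)) x) (symdiff y x) = symdiff (label (vertex y)) y"
    unfolding symdiff_def by blast
  then have "vertex (symdiff (label (vertex y)) x) = vertex (symdiff y x)"
    using vertex_eq_iff[OF symdiff_subset[OF r assms(2)] symdiff_subset[OF assms]]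
      symdiff_label_vertex_in_code[OF assms(1)] by simp
  then show ?thesis unfolding translate_def using vertex_in[OF assms(1)] by simp
qed

lemma translate_in: "x \<subseteq> {..<N} \<Longrightarrow> v \<in> V \<Longrightarrow> translate x v \<in> V"
  unfolding translate_def using vertex_in symdiff_subset label_subset by auto

lemma translate_translate:
  assumes "x \<subseteq> {..<N}" "x' \<subseteq> {..<N}" "v \<in> V"
  shows "translate x' (translate x v) = translate (symdiff x x') v"
proof -
  obtain y where y: "y \<subseteq> {..<N}" "v = vertex y" using vertex_cases[OF assms(3)] .
  then show ?thesis
    using translate_vertex symdiff_subset assms(1,2) by (simp add: symdiff_assoc)
qed

lemma translate_empty: "v \<in> V \<Longrightarrow> translate {} v = v"
  unfolding translate_def using vertex_label by simp

lemma nb_translate: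
  assumes "x \<subseteq> {..<N}" "i < N" "v \<in> V"
  shows "translate x (nb i v) = nb i (translate x v)"
proof -
  obtain y where y: "y \<subseteq> {..<N}" "v = vertex y" using vertex_cases[OF assms(3)] .
  have "symdiff (symdiff y {i}) x = symdiff (symdiff y x) {i}"
    unfolding symdiff_def by blast
  then show ?thesis
    using y nb_vertex translate_vertex symdiff_flip_subset symdiff_subset assms(1,2) by simp
qed

lemma translate_eq_iff:
  assumes "x \<subseteq> {..<N}" "x' \<subseteq> {..<N}"
  shows "translate x = translate x' \<longleftrightarrow> symdiff x x' \<in> C"
proof
  assume "translate x = translate x'"
  then have "translate x (vertex {}) = translate x' (vertex {})" by simp
  then have "vertex x = vertex x'" using translate_vertex[of "{}"] assms by simp
  then show "symdiff x x' \<in> C" using vertex_eq_iff assms by simp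
next
  assume "symdiff x x' \<in> C"
  show "translate x = translate x'"
  proof
    fix v
    show "translate x v = translate x' v"
    proof (cases "v \<in> V")
      case True
      then obtain y where "y \<subseteq> {..<N}" "v = vertex y" using vertex_cases by blast
      moreover have "symdiff (symdiff y x) (symdiff y x') = symdiff x x'"
        unfolding symdiff_def by blast
      ultimately show ?thesis
        using translate_vertex vertex_eq_iff symdiff_subset assms \<open>symdiff x x' \<in> C\<close> by simp
    qed (simp add: translate_def)
  qed
qed

lemma commuting_map_eq_translate:
  assumes maps: "\<And>v. v \<in> V \<Longrightarrow> \<sigma> v \<in> V"
    and commutes: "\<And>i v. i < N \<Longrightarrow> v \<in> V \<Longrightarrow> \<sigma> (nb i v) = nb i (\<sigma> v)"
    and "v \<in> V"
  shows "\<sigma> v = translate (label (\<sigma> (vertex {}))) v"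
proof -
  define x where "x = label (\<sigma> (vertex {}))"
  have x: "x \<subseteq> {..<N}" "\<sigma> (vertex {}) = vertex x"
    unfolding x_def using label_subset vertex_label maps[OF vertex_in[of "{}"]] by auto
  have "\<sigma> (vertex y) = vertex (symdiff y x)" if "y \<subseteq> {..<N}" for y
    using that
  proof (induction rule: cube_induct)
    case (flip y i)
    have "\<sigma> (vertex (symdiff y {i})) = nb i (\<sigma> (vertex y))"
      using commutes[OF flip.hyps(2) vertex_in[OF flip.hyps(1)]] nb_vertex[OF flip.hyps(1,2)] by simp
    also have "\<dots> = vertex (symdiff (symdiff y x) {i})"
      using flip.IH nb_vertex[OF symdiff_subset[OF flip.hyps(1) x(1)] flip.hyps(2)] by simp
    also have "symdiff (symdiff y x) {i} = symdiff (symdiff y {i}) x"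
      unfolding symdiff_def by blast
    finally show ?case .
  qed (use x in simp)
  moreover obtain y where "y \<subseteq> {..<N}" "v = vertex y" using vertex_cases[OF assms(3)] .
  ultimately show ?thesis using translate_vertex x(1) unfolding x_def[symmetric] by simp
qed

definition switching_equivalent :: "('v \<Rightarrow> 'v) \<Rightarrow> bool" where
  "switching_equivalent \<sigma> \<longleftrightarrow> (\<exists>S. \<forall>i<N. \<forall>v\<in>V.
     dashed {\<sigma> v, \<sigma> (nb i v)} = (dashed {v, nb i v} \<noteq> ((v \<in> S) \<noteq> (nb i v \<in> S))))"

text \<open>Translating by \<open>x\<close> changes the dashing by the switching of the labels \<open>translate_switch x\<close>,
  which is a function of the vertices exactly when \<open>x\<close> is orthogonal to the code.\<close>

definition translate_switch :: "nat set \<Rightarrow> nat set \<Rightarrow> bool" where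
  "translate_switch x y \<longleftrightarrow> (switching (symdiff y x) \<noteq> switching y) \<noteq> inversion_parity x y"

lemma translate_switch_flip:
  assumes "x \<subseteq> {..<N}" "y \<subseteq> {..<N}" "i < N"
  shows "(translate_switch x (symdiff y {i}) \<noteq> translate_switch x y) \<longleftrightarrow>
         edge_dashed (symdiff y x) i \<noteq> edge_dashed y i"
proof -
  have "finite x" "finite y" using assms(1,2) finite_subset by auto
  have "symdiff (symdiff y {i}) x = symdiff (symdiff y x) {i}"
    unfolding symdiff_def by blast
  then show ?thesis
    unfolding translate_switch_def
    using edge_dashed_eq_switching[OF symdiff_subset[OF assms(2,1)] assms(3)]
      edge_dashed_eq_switching[OF assms(2,3)] cube_sign_symdiff[of y x i]
      inversion_parity_symdiff_right[OF \<open>finite x\<close> \<open>finite y\<close>, of "{i}"] inversion_parity_singleton[of x i]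
    by simp argo
qed

text \<open>The dashing is invariant under translation by a codeword, so such a translation changes
  the switching by an affine function of the labels.\<close>

lemma switching_symdiff_code:
  assumes "c \<in> C" "y \<subseteq> {..<N}"
  shows "switching (symdiff y c) \<noteq> switching y \<longleftrightarrow> (switching c \<noteq> switching {}) \<noteq> inversion_parity c y"
proof -
  have c: "c \<subseteq> {..<N}" "finite c" using code_subset finite_codeword assms(1) by auto
  define F where "F y \<longleftrightarrow> (switching (symdiff y c) \<noteq> switching y) \<noteq> inversion_parity c y" for y
  have "F (symdiff y {i}) = F y" if y: "y \<subseteq> {..<N}" and i: "i < N" for y i
  proof -
    have "finite y" using y finite_subset by blast
    have "symdiff (symdiff y {i}) c = symdiff (symdiff y c) {i}"
      unfolding symdiff_def by blast
    then show ?thesis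
      unfolding F_def
      using edge_dashed_symdiff_code[OF assms(1) y i]
        edge_dashed_eq_switching[OF symdiff_subset[OF y c(1)] i] edge_dashed_eq_switching[OF y i]
        cube_sign_symdiff[of y c i] inversion_parity_symdiff_right[OF c(2) \<open>finite y\<close>, of "{i}"]
        inversion_parity_singleton[of c i]
      by simp argo
  qed
  then have "F y = F {}" using flip_invariant_imp_constant assms(2) by blast
  then show ?thesis unfolding F_def by simp argo
qed

lemma translate_switch_symdiff_code:
  assumes "x \<subseteq> {..<N}" "c \<in> C" "y \<subseteq> {..<N}"
  shows "translate_switch x (symdiff y c) \<noteq> translate_switch x y \<longleftrightarrow> odd (card (c \<inter> x))"
proof -
  have fin: "finite x" "finite y" "finite c" using assms finite_subset finite_codeword by auto
  have "symdiff (symdiff y c) x = symdiff (symdiff y x) c"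
    unfolding symdiff_def by blast
  then show ?thesis
    unfolding translate_switch_def
    using switching_symdiff_code[OF assms(2) symdiff_subset[OF assms(3,1)]] switching_symdiff_code[OF assms(2,3)]
      inversion_parity_symdiff_right[OF fin(3,2,1)] inversion_parity_symdiff_right[OF fin(1,2,3)]
      inversion_parity_swap[OF fin(3,1) even_card_codeword[OF assms(2)]]
    by simp argo
qed

lemma dashed_translate_vertex:
  assumes "x \<subseteq> {..<N}" "y \<subseteq> {..<N}" "i < N"
  shows "dashed {translate x (vertex y), translate x (nb i (vertex y))} \<longleftrightarrow> edge_dashed (symdiff y x) i"
proof -
  have "symdiff (symdiff y {i}) x = symdiff (symdiff y x) {i}"
    unfolding symdiff_def by blast
  then show ?thesis
    unfolding edge_dashed_def
    using nb_vertex[OF assms(2,3)] translate_vertex[OF assms(2,1)]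
      translate_vertex[OF symdiff_flip_subset[OF assms(2,3)] assms(1)] by simp
qed

lemma orthogonal_if_switching_equivalent_translate:
  assumes x: "x \<subseteq> {..<N}" and "switching_equivalent (translate x)" and "c \<in> C"
  shows "even (card (x \<inter> c))"
proof -
  obtain S where S: "\<And>i v. i < N \<Longrightarrow> v \<in> V \<Longrightarrow>
      dashed {translate x v, translate x (nb i v)} = (dashed {v, nb i v} \<noteq> ((v \<in> S) \<noteq> (nb i v \<in> S)))"
    using assms(2) unfolding switching_equivalent_def by blast
  define F where "F y \<longleftrightarrow> (vertex y \<in> S) \<noteq> translate_switch x y" for y
  have "F (symdiff y {i}) = F y" if y: "y \<subseteq> {..<N}" and i: "i < N" for y i
  proof -
    have "edge_dashed (symdiff y x) i \<longleftrightarrow> edge_dashed y i \<noteq> ((vertex y \<in> S) \<noteq> (vertex (symdiff y {i}) \<in> S))"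
      using S[OF i vertex_in[OF y]] dashed_translate_vertex[OF x y i] nb_vertex[OF y i]
      unfolding edge_dashed_def by simp
    then show ?thesis
      using translate_switch_flip[OF x y i] unfolding F_def by argo
  qed
  then have "F c = F {}"
    using flip_invariant_imp_constant code_subset[OF assms(3)] by blast
  moreover have "vertex c = vertex {}"
    using vertex_eq_iff code_subset assms(3) by simp
  ultimately have "translate_switch x (symdiff {} c) = translate_switch x {}"
    unfolding F_def by simp argo
  then show ?thesis
    using translate_switch_symdiff_code[OF x assms(3), of "{}"] by (simp add: Int_commute)
qed

lemma switching_equivalent_translate_if_orthogonal:
  assumes x: "x \<subseteq> {..<N}" and orth: "\<And>c. c \<in> C \<Longrightarrow> even (card (x \<inter> c))"
  shows "switching_equivalent (translate x)"
proof -
  define S where "S = {v \<in> V. translate_switch x (label v)}"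
  have S: "vertex y \<in> S \<longleftrightarrow> translate_switch x y" if y: "y \<subseteq> {..<N}" for y
  proof -
    define c where "c = symdiff (label (vertex y)) y"
    have "c \<in> C" unfolding c_def using symdiff_label_vertex_in_code[OF y] .
    moreover have "label (vertex y) = symdiff y c"
      unfolding c_def symdiff_def by blast
    ultimately show ?thesis
      unfolding S_def using translate_switch_symdiff_code[OF x _ y] orth vertex_in[OF y]
      by (simp add: Int_commute)
  qed
  show ?thesis
    unfolding switching_equivalent_def
  proof (intro exI allI impI ballI)
    fix i v assume i: "i < N" and "v \<in> V"
    then obtain y where y: "y \<subseteq> {..<N}" "v = vertex y" using vertex_cases by blast
    show "dashed {translate x v, translate x (nb i v)} = (dashed {v, nb i v} \<noteq> ((v \<in> S) \<noteq> (nb i v \<in> S)))"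
      using dashed_translate_vertex[OF x y(1) i] translate_switch_flip[OF x y(1) i]
        S[OF y(1)] S[OF symdiff_flip_subset[OF y(1) i]]
      unfolding y(2) nb_vertex[OF y(1) i] edge_dashed_def by argo
  qed
qed

definition admissible :: "nat set set" where
  "admissible = binary_dual N (span_insert {..<N} C)"

lemma mem_admissible_iff:
  "x \<in> admissible \<longleftrightarrow> x \<subseteq> {..<N} \<and> even (card x) \<and> (\<forall>c\<in>C. even (card (x \<inter> c)))"
  unfolding admissible_def binary_dual_span_insert[OF empty_in_code]
  unfolding binary_dual_def by (auto simp: Int_absorb2)

lemma admissible_subset: "x \<in> admissible \<Longrightarrow> x \<subseteq> {..<N}"
  by (simp add: mem_admissible_iff)

lemma code_subset_admissible: "C \<subseteq> admissible"
  using code_subset even_card_codeword even_card_Int_codewords by (auto simp: mem_admissible_iff)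

lemma translate_mem_aut:
  assumes "x \<in> admissible"
  shows "translate x \<in> AUT"
proof -
  have x: "x \<subseteq> {..<N}" "even (card x)" "\<And>c. c \<in> C \<Longrightarrow> even (card (x \<inter> c))"
    using assms by (auto simp: mem_admissible_iff)
  have bij: "bij_betw (translate x) V V"
    by (rule bij_betw_byWitness[where f'="translate x"])
      (auto simp: translate_translate translate_empty translate_in x(1))
  have boson: "boson (translate x v) \<longleftrightarrow> boson v" if v: "v \<in> V" for v
  proof -
    obtain y where y: "y \<subseteq> {..<N}" "v = vertex y" using vertex_cases[OF v] .
    have "finite x" "finite y" using x(1) y(1) finite_subset by auto
    then have "even (card (symdiff y x)) \<longleftrightarrow> even (card y)"
      using even_card_symdiff x(2) by simp
    then show ?thesis
      using boson_vertex[OF y(1)] boson_vertex[OF symdiff_subset[OF y(1) x(1)]]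
        translate_vertex[OF y(1) x(1)] y(2) by simp
  qed
  have "switching_equivalent (translate x)"
    using switching_equivalent_translate_if_orthogonal x(1,3) by blast
  moreover have "translate x v = v" if "v \<notin> V" for v
    using that by (simp add: translate_def)
  ultimately show ?thesis
    unfolding adinkra_aut_def switching_equivalent_def
    using bij boson nb_translate[OF x(1)] by blast
qed

lemma aut_imp_translate:
  assumes "\<sigma> \<in> AUT"
  obtains x where "x \<in> admissible" "\<sigma> = translate x"
proof -
  have bij: "bij_betw \<sigma> V V" and outside: "\<And>v. v \<notin> V \<Longrightarrow> \<sigma> v = v"
    and boson: "\<And>v. v \<in> V \<Longrightarrow> boson (\<sigma> v) \<longleftrightarrow> boson v"
    and commutes: "\<And>i v. i < N \<Longrightarrow> v \<in> V \<Longrightarrow> \<sigma> (nb i v) = nb i (\<sigma> v)"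
    and "switching_equivalent \<sigma>"
    using assms unfolding adinkra_aut_def switching_equivalent_def by blast+
  have maps: "\<And>v. v \<in> V \<Longrightarrow> \<sigma> v \<in> V"
    using bij_betw_apply[OF bij] .
  define x where "x = label (\<sigma> (vertex {}))"
  have x: "x \<subseteq> {..<N}" "\<sigma> (vertex {}) = vertex x"
    unfolding x_def using label_subset vertex_label maps[OF vertex_in[of "{}"]] by auto
  have \<sigma>: "\<sigma> = translate x"
  proof
    fix v
    show "\<sigma> v = translate x v"
    proof (cases "v \<in> V")
      case True
      show ?thesis using commuting_map_eq_translate[OF maps commutes True] unfolding x_def .
    qed (simp add: outside translate_def)
  qed
  have "even (card x)"
    using boson[OF vertex_in[of "{}"]] boson_vertex[OF x(1)] x(2) by simp argo
  moreover have "\<forall>c\<in>C. even (card (x \<inter> c))"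
    using orthogonal_if_switching_equivalent_translate x(1) \<open>switching_equivalent \<sigma>\<close> \<sigma> by blast
  ultimately show thesis
    using that \<sigma> x(1) by (simp add: mem_admissible_iff)
qed

lemma aut_eq_translate_image: "AUT = translate ` admissible"
  using aut_imp_translate translate_mem_aut by blast

lemma card_admissible_eq: "card admissible = card C * card AUT"
proof (rule card_eq_mult_card_if_fibres)
  show fin: "finite admissible"
    unfolding admissible_def binary_dual_def by (rule finite_subset[of _ "Pow {..<N}"]) auto
  show "translate ` admissible \<subseteq> AUT" by (simp add: aut_eq_translate_image)
  show "finite AUT" using fin by (simp add: aut_eq_translate_image)
  fix \<sigma> assume "\<sigma> \<in> AUT"
  then obtain x0 where x0: "x0 \<in> admissible" "\<sigma> = translate x0"
    using aut_imp_translate by blast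
  have "{x\<in>admissible. translate x = \<sigma>} = symdiff x0 ` C"
  proof (intro set_eqI iffI)
    fix x assume x: "x \<in> {x\<in>admissible. translate x = \<sigma>}"
    then have "translate x0 = translate x" using x0(2) by simp
    then show "x \<in> symdiff x0 ` C"
      using translate_eq_iff[OF admissible_subset[OF x0(1)] admissible_subset[of x]] x
      by (auto intro: image_eqI[of _ _ "symdiff x0 x"])
  next
    fix x assume "x \<in> symdiff x0 ` C"
    then obtain c where c: "c \<in> C" "x = symdiff x0 c" by blast
    then have "x \<in> admissible"
      using symdiff_mem_binary_dual x0(1) code_subset_admissible unfolding admissible_def by blast
    moreover have "symdiff x x0 = c" unfolding c(2) symdiff_def by blast
    ultimately show "x \<in> {x\<in>admissible. translate x = \<sigma>}"
      using translate_eq_iff[OF admissible_subset admissible_subset[OF x0(1)]] c(1) x0(2) by auto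
  qed
  moreover have "inj_on (symdiff x0) C"
    by (rule inj_onI) (metis symdiff_cancel(1))
  ultimately show "card {x\<in>admissible. translate x = \<sigma>} = card C"
    by (simp add: card_image)
qed

lemma card_aut_mult: "card C * card AUT * card (span_insert {..<N} C) = 2 ^ N"
  using card_binary_dual_mult_card[OF binary_subspace_span_insert[OF code subset_refl]] card_admissible_eq
  unfolding admissible_def by simp

definition orbit :: "'v \<Rightarrow> 'v set" where
  "orbit v = (\<lambda>\<sigma>. \<sigma> v) ` AUT"

lemma aut_orbits_eq: "aut_orbits N V boson nb dashed = orbit ` V"
  unfolding aut_orbits_def orbit_def ..

lemma orbit_eq: "orbit v = (\<lambda>x. translate x v) ` admissible"
  unfolding orbit_def aut_eq_translate_image image_image ..

text \<open>The automorphism group acts freely: a translation fixing one vertex translates by a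
  codeword, hence is the identity.\<close>

lemma card_orbit:
  assumes "v \<in> V"
  shows "card (orbit v) = card AUT"
  unfolding orbit_def
proof (rule card_image, rule inj_onI)
  fix \<sigma> \<sigma>' assume "\<sigma> \<in> AUT" "\<sigma>' \<in> AUT" and eq: "\<sigma> v = \<sigma>' v"
  obtain x x' where x: "x \<in> admissible" "\<sigma> = translate x" and x': "x' \<in> admissible" "\<sigma>' = translate x'"
    using aut_imp_translate[OF \<open>\<sigma> \<in> AUT\<close>] aut_imp_translate[OF \<open>\<sigma>' \<in> AUT\<close>] by metis
  note x = admissible_subset[OF x(1)] x(2) and x' = admissible_subset[OF x'(1)] x'(2)
  obtain y where y: "y \<subseteq> {..<N}" "v = vertex y" using vertex_cases[OF assms] .
  have "vertex (symdiff y x) = vertex (symdiff y x')"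
    using eq translate_vertex[OF y(1)] x x' y(2) by simp
  moreover have "symdiff (symdiff y x) (symdiff y x') = symdiff x x'"
    unfolding symdiff_def by blast
  ultimately have "symdiff x x' \<in> C"
    using vertex_eq_iff[OF symdiff_subset[OF y(1) x(1)] symdiff_subset[OF y(1) x'(1)]] by simp
  then show "\<sigma> = \<sigma>'" using translate_eq_iff[OF x(1) x'(1)] x(2) x'(2) by simp
qed

lemma orbit_eq_if_mem:
  assumes "v \<in> V" "w \<in> orbit v"
  shows "orbit w = orbit v"
proof -
  obtain x0 where x0: "x0 \<in> admissible" "w = translate x0 v"
    using assms(2) unfolding orbit_eq by blast
  have shift: "translate x w = translate (symdiff x0 x) v" if "x \<in> admissible" for x
    using translate_translate[OF admissible_subset[OF x0(1)] admissible_subset[OF that] assms(1)] x0(2)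
    by simp
  have shift_image: "symdiff x0 ` admissible = admissible"
  proof
    show "symdiff x0 ` admissible \<subseteq> admissible"
      using symdiff_mem_binary_dual x0(1) unfolding admissible_def by blast
    show "admissible \<subseteq> symdiff x0 ` admissible"
    proof
      fix x assume "x \<in> admissible"
      then have "symdiff x0 x \<in> admissible"
        using symdiff_mem_binary_dual x0(1) unfolding admissible_def by blast
      then show "x \<in> symdiff x0 ` admissible" by (auto intro: image_eqI[of _ _ "symdiff x0 x"])
    qed
  qed
  have "orbit w = (\<lambda>x. translate (symdiff x0 x) v) ` admissible"
    unfolding orbit_eq using shift by (rule image_cong[OF refl])
  also have "\<dots> = (\<lambda>x. translate x v) ` (symdiff x0 ` admissible)"
    by (simp add: image_image)
  finally show ?thesis unfolding shift_image orbit_eq .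
qed

lemma mem_orbit_self: "v \<in> V \<Longrightarrow> v \<in> orbit v"
  using translate_empty code_subset_admissible empty_in_code unfolding orbit_eq by force

lemma orbit_subset: "v \<in> V \<Longrightarrow> orbit v \<subseteq> V"
  using translate_in admissible_subset unfolding orbit_eq by blast

lemma card_V_eq: "card V = card AUT * card (orbit ` V)"
proof (rule card_eq_mult_card_if_fibres[OF finite_V])
  show "orbit ` V \<subseteq> orbit ` V" "finite (orbit ` V)" using finite_V by simp_all
  fix Ob assume "Ob \<in> orbit ` V"
  then obtain v where v: "v \<in> V" "Ob = orbit v" by blast
  have "{w\<in>V. orbit w = Ob} = orbit v"
    using mem_orbit_self orbit_subset[OF v(1)] orbit_eq_if_mem[OF v(1)] v(2) by blast
  then show "card {w\<in>V. orbit w = Ob} = card AUT" using card_orbit[OF v(1)] by simp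
qed

end

theorem mainTheorem8:
  fixes N k :: nat
    and V :: "'v set" and boson :: "'v \<Rightarrow> bool"
    and nb :: "nat \<Rightarrow> 'v \<Rightarrow> 'v" and dashed :: "'v set \<Rightarrow> bool"
    and C :: "nat set set"
  assumes "adinkra N V boson nb dashed"
    and "card V = 2 ^ (N - k)"
    and "doubly_even_code N k C"
    and "associated_code N V boson nb dashed C"
  shows "let a = (if {..<N} \<in> C then 0 else 1 :: nat) in
           card (adinkra_aut N V boson nb dashed) = 2 ^ (N - 2 * k - a) \<and>
           card (aut_orbits N V boson nb dashed) = 2 ^ (k + a) \<and>
           (\<forall>O1\<in>aut_orbits N V boson nb dashed. \<forall>O2\<in>aut_orbits N V boson nb dashed.
              card O1 = card O2)"
proof -
  obtain \<phi> where "bij_betw \<phi> V (quot_vertices N C)" "\<forall>i<N. \<forall>v\<in>V. \<phi> (nb i v) = quot_nb i (\<phi> v)"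
    using assms(4) unfolding associated_code_def by blast
  then interpret quotient_adinkra N V boson nb dashed C \<phi>
    using assms(1,3) doubly_even_code_imp_binary_subspace by unfold_locales (auto simp: doubly_even_code_def)
  define a where "a = (if {..<N} \<in> C then 0 else 1 :: nat)"
  have "card C = 2 ^ k" using assms(3) unfolding doubly_even_code_def by simp
  moreover have "card (span_insert {..<N} C) = 2 ^ (k + a)"
    using card_span_insert[OF code] \<open>card C = 2 ^ k\<close> unfolding a_def by simp
  moreover have "(2::nat) ^ (2 * k + a) = 2 ^ k * 2 ^ (k + a)"
    by (simp add: power_add mult_2)
  ultimately have "card AUT * 2 ^ (2 * k + a) = 2 ^ N"
    using card_aut_mult by (simp add: ac_simps)
  then have "2 * k + a \<le> N" and aut: "card AUT = 2 ^ (N - 2 * k - a)"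
    using mult_power2_eq_power2D by auto
  have "(k + a) + (N - 2 * k - a) = N - k"
    using \<open>2 * k + a \<le> N\<close> by simp
  then have "card (orbit ` V) * 2 ^ (N - 2 * k - a) = 2 ^ (k + a) * 2 ^ (N - 2 * k - a)"
    using card_V_eq assms(2) aut by (metis power_add mult.commute)
  then have orbits: "card (orbit ` V) = 2 ^ (k + a)"
    by simp
  show ?thesis
    using aut orbits card_orbit unfolding Let_def a_def[symmetric] aut_orbits_eq by simp
qed

end
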